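(* Let $A$ be a sub-tree of $T$ with sub-trees $A_0,\dots,A_m$ as in the context. For $i=0,\dots,m$ let $S_i^*$ be the inclusion-maximal set among the maximizers of $G(S,d(r_A))$ over $S\subseteq V_{A_i}$ (i.e. the maximal optimal set of $f_{A_i}$ at $x=d(r_A)$, which lies in its domain $[0,d(r_{A_i})]$). Then the inclusion-maximal optimal set of $f_A$ at $x=d(r_A)$, which is the largest element of the matryoshka $\mathcal{M}_A$, equals $S_0^*\cup S_1^*\cup\dots\cup S_m^*$.
   Context: Setting. $T$ is a finite tree rooted at $r_T$, node set $V_T$; every edge $e$ has weight $w_e\ge 0$. Every node $v$ has a probability $\pi_v\in(0,1]$ and a prize $p_v\in\mathbb{R}$. $d(v)$ is the total weight of the path from $r_T$ to $v$. A random set $\omega\subseteq V_T$ contains each node $v$ independently with probability $\pi_v$. For $S\subseteq V_T$, $P(S)=1-\prod_{s\in S}(1-\pi_s)$ ($P(\emptyset)=0$). For a node $a$, the sub-tree $A$ rooted at $r_A=a$ consists of $a$ and all its descendants, with node set $V_A$; if $a$ has children $c_1,\dots,c_m$, then $A_i$ ($1\le i\le m$) is the sub-tree rooted at $c_i$, $A_0$ is the sub-tree consisting of the single node $r_A$, $\mathcal{I}_A=\{0,1,\dots,m\}$, and $V_A^I=\bigcup_{i\in I}V_{A_i}$ for $I\subseteq\mathcal{I}_A$. For $Q\subseteq V_T$, $W(Q)$ is the total weight of the edges lying on at least one path from $r_T$ to a node of $Q$. For $S\subseteq V_A$ and $x\le d(r_A)$ the expected profit is $G(S,x)=\sum_{s\in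 S}p_s\pi_s-\mathbb{E}[W(S\cap\omega)]+x\,P(S)$. Characteristic function. For a sub-tree $A$, $I\subseteq\mathcal{I}_A$ and $x\in[0,d(r_A)]$, $f_A^I(x)=\max_{S\subseteq V_A^I}G(S,x)$, and $f_A=f_A^{\mathcal{I}_A}$. A set $S\subseteq V_A^I$ with $G(S,x)=f_A^I(x)$ is an optimal set (for $f_A^I$) at $x$. The matryoshka $\mathcal{M}_A^I$ is the family of all $S\subseteq V_A^I$ such that for some $x\in[0,d(r_A)]$, $S$ is an optimal set at $x$ and no proper superset of $S$ contained in $V_A^I$ is optimal at $x$; $\mathcal{M}_A=\mathcal{M}_A^{\mathcal{I}_A}$. *)

theory Defs
  imports Complex_Main
begin

text \<open>A finite rooted tree: node set V, root r, parent map par (meaningful on V - {r}).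
  Every non-root node v represents the edge (par v, v), whose weight is w v.\<close>

definition rooted_tree :: "'v set \<Rightarrow> 'v \<Rightarrow> ('v \<Rightarrow> 'v) \<Rightarrow> bool" where
  "rooted_tree V r par \<longleftrightarrow> finite V \<and> r \<in> V \<and> (\<forall>v\<in>V - {r}. par v \<in> V)
     \<and> (\<forall>v\<in>V. \<exists>n. (par ^^ n) v = r)"

definition depth :: "'v \<Rightarrow> ('v \<Rightarrow> 'v) \<Rightarrow> 'v \<Rightarrow> nat" where
  "depth r par v = (LEAST n. (par ^^ n) v = r)"

definition anc :: "'v \<Rightarrow> ('v \<Rightarrow> 'v) \<Rightarrow> 'v \<Rightarrow> 'v set" where
  "anc r par v = {(par ^^ k) v | k. k \<le> depth r par v}"

definition desc :: "'v set \<Rightarrow> 'v \<Rightarrow> ('v \<Rightarrow> 'v) \<Rightarrow> 'v \<Rightarrow> 'v set" where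
  "desc V r par a = {v \<in> V. a \<in> anc r par v}"

definition children :: "'v set \<Rightarrow> 'v \<Rightarrow> ('v \<Rightarrow> 'v) \<Rightarrow> 'v \<Rightarrow> 'v set" where
  "children V r par a = {c \<in> V. c \<noteq> r \<and> par c = a}"

definition dpath :: "'v \<Rightarrow> ('v \<Rightarrow> 'v) \<Rightarrow> ('v \<Rightarrow> real) \<Rightarrow> 'v \<Rightarrow> real" where
  "dpath r par w v = sum w (anc r par v - {r})"

definition Wt :: "'v \<Rightarrow> ('v \<Rightarrow> 'v) \<Rightarrow> ('v \<Rightarrow> real) \<Rightarrow> 'v set \<Rightarrow> real" where
  "Wt r par w Q = sum w ((\<Union>q\<in>Q. anc r par q) - {r})"

definition Pr :: "('v \<Rightarrow> real) \<Rightarrow> 'v set \<Rightarrow> real" where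
  "Pr \<pi> S = 1 - (\<Prod>s\<in>S. 1 - \<pi> s)"

text \<open>E[W(S \<inter> \<omega>)] with \<omega> containing each node independently with probability \<pi>.\<close>
definition expW :: "'v \<Rightarrow> ('v \<Rightarrow> 'v) \<Rightarrow> ('v \<Rightarrow> real) \<Rightarrow> ('v \<Rightarrow> real) \<Rightarrow> 'v set \<Rightarrow> real" where
  "expW r par w \<pi> S = (\<Sum>U\<in>Pow S. (\<Prod>s\<in>U. \<pi> s) * (\<Prod>s\<in>S - U. 1 - \<pi> s) * Wt r par w U)"

definition G :: "'v \<Rightarrow> ('v \<Rightarrow> 'v) \<Rightarrow> ('v \<Rightarrow> real) \<Rightarrow> ('v \<Rightarrow> real) \<Rightarrow> ('v \<Rightarrow> real)
    \<Rightarrow> 'v set \<Rightarrow> real \<Rightarrow> real" where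
  "G r par w \<pi> p S x = (\<Sum>s\<in>S. p s * \<pi> s) - expW r par w \<pi> S + x * Pr \<pi> S"

definition optimal :: "'v \<Rightarrow> ('v \<Rightarrow> 'v) \<Rightarrow> ('v \<Rightarrow> real) \<Rightarrow> ('v \<Rightarrow> real) \<Rightarrow> ('v \<Rightarrow> real)
    \<Rightarrow> 'v set \<Rightarrow> real \<Rightarrow> 'v set \<Rightarrow> bool" where
  "optimal r par w \<pi> p D x S \<longleftrightarrow> S \<subseteq> D \<and> (\<forall>S'. S' \<subseteq> D \<longrightarrow> G r par w \<pi> p S' x \<le> G r par w \<pi> p S x)"

definition largest_optimal :: "'v \<Rightarrow> ('v \<Rightarrow> 'v) \<Rightarrow> ('v \<Rightarrow> real) \<Rightarrow> ('v \<Rightarrow> real) \<Rightarrow> ('v \<Rightarrow> real)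
    \<Rightarrow> 'v set \<Rightarrow> real \<Rightarrow> 'v set \<Rightarrow> bool" where
  "largest_optimal r par w \<pi> p D x S \<longleftrightarrow> optimal r par w \<pi> p D x S
     \<and> (\<forall>S'. optimal r par w \<pi> p D x S' \<longrightarrow> S' \<subseteq> S)"

end

theory Submission
  imports Defs "HOL-Library.Disjoint_Sets"
begin

text \<open>By linearity of expectation, \<open>E[W(S \<inter> \<omega>)]\<close> is the sum over the edges \<open>e\<close> of \<open>w\<^sub>e\<close> times
  the probability that \<open>\<omega>\<close> meets the part of \<open>S\<close> below \<open>e\<close>. For \<open>S \<subseteq> V\<^sub>A\<close> and \<open>x = d(r\<^sub>A)\<close> the
  edges on the path from \<open>r\<^sub>T\<close> to \<open>r\<^sub>A\<close> contribute exactly \<open>d(r\<^sub>A) P(S)\<close>, which cancels \<open>x P(S)\<close>;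
  every other edge lies below at most one of the parts \<open>V\<^sub>A\<^sub>i\<close>. Hence \<open>G(\<cdot>, d(r\<^sub>A))\<close> is additive
  over the partition of \<open>V\<^sub>A\<close> into the \<open>V\<^sub>A\<^sub>i\<close>, and for an additively separable objective the
  optimal sets are exactly the unions of optimal sets of the parts; in particular the largest
  one is the union of the largest ones.\<close>

definition subset_weight :: "('v \<Rightarrow> real) \<Rightarrow> 'v set \<Rightarrow> 'v set \<Rightarrow> real" where
  "subset_weight \<pi> S U = (\<Prod>s\<in>U. \<pi> s) * (\<Prod>s\<in>S - U. 1 - \<pi> s)"

lemma sum_subset_weight_avoiding:
  assumes "finite S"
  shows "(\<Sum>U\<in>Pow S. subset_weight \<pi> S U * (if U \<inter> B = {} then 1 else 0)) = (\<Prod>s\<in>S \<inter> B. 1 - \<pi> s)"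
proof -
  have "(\<Sum>U\<in>Pow S. subset_weight \<pi> S U * (if U \<inter> B = {} then 1 else 0))
      = (\<Sum>U\<in>Pow (S - B). subset_weight \<pi> S U)"
    by (rule sum.mono_neutral_cong_right) (auto simp: assms)
  also have "\<dots> = (\<Sum>U\<in>Pow (S - B). subset_weight \<pi> (S - B) U * (\<Prod>s\<in>S \<inter> B. 1 - \<pi> s))"
  proof (rule sum.cong)
    fix U assume "U \<in> Pow (S - B)"
    then have "S - U = (S - B - U) \<union> (S \<inter> B)" and "(S - B - U) \<inter> (S \<inter> B) = {}" by auto
    then show "subset_weight \<pi> S U = subset_weight \<pi> (S - B) U * (\<Prod>s\<in>S \<inter> B. 1 - \<pi> s)"
      unfolding subset_weight_def using assms by (simp add: prod.union_disjoint)
  qed simp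
  also have "\<dots> = (\<Sum>U\<in>Pow (S - B). subset_weight \<pi> (S - B) U) * (\<Prod>s\<in>S \<inter> B. 1 - \<pi> s)"
    by (simp add: sum_distrib_right)
  also have "(\<Sum>U\<in>Pow (S - B). subset_weight \<pi> (S - B) U) = (\<Prod>s\<in>S - B. \<pi> s + (1 - \<pi> s))"
    unfolding subset_weight_def using prod_add[of "S - B" \<pi> "\<lambda>s. 1 - \<pi> s"] assms by simp
  finally show ?thesis by simp
qed

lemma sum_subset_weight_hitting:
  assumes "finite S"
  shows "(\<Sum>U\<in>Pow S. subset_weight \<pi> S U * (if U \<inter> B = {} then 0 else 1)) = Pr \<pi> (S \<inter> B)"
proof -
  have "(\<Sum>U\<in>Pow S. subset_weight \<pi> S U * (if U \<inter> B = {} then 0 else 1))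
      = (\<Sum>U\<in>Pow S. subset_weight \<pi> S U * (if U \<inter> {} = {} then 1 else 0)
          - subset_weight \<pi> S U * (if U \<inter> B = {} then 1 else 0))"
    by (rule sum.cong) auto
  then show ?thesis
    unfolding sum_subtractf sum_subset_weight_avoiding[OF assms] Pr_def by simp
qed

lemma Pr_empty [simp]: "Pr \<pi> {} = 0"
  unfolding Pr_def by simp

lemma sum_at_most_one_nonempty:
  fixes f :: "'a set \<Rightarrow> 'b::comm_monoid_add"
  assumes "f {} = 0" and "finite I"
    and single: "\<And>i j. i \<in> I \<Longrightarrow> j \<in> I \<Longrightarrow> X i \<noteq> {} \<Longrightarrow> X j \<noteq> {} \<Longrightarrow> i = j"
  shows "f (\<Union>i\<in>I. X i) = (\<Sum>i\<in>I. f (X i))"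
proof (cases "\<exists>i\<in>I. X i \<noteq> {}")
  case True
  then obtain i where i: "i \<in> I" "X i \<noteq> {}" by blast
  have others: "\<forall>j\<in>I - {i}. X j = {}"
    using single i by blast
  have "(\<Sum>j\<in>I - {i}. f (X j)) = 0"
    using others assms(1) by (intro sum.neutral) simp
  then have "(\<Sum>j\<in>I. f (X j)) = f (X i)"
    using sum.remove[OF \<open>finite I\<close> i(1), of "\<lambda>j. f (X j)"] by simp
  moreover have "(\<Union>j\<in>I. X j) = X i" using others i by blast
  ultimately show ?thesis by simp
qed (use assms(1) in simp)

lemma largest_optimal_UN:
  assumes fin: "finite I" and disj: "disjoint_family_on D I"
    and additive: "\<And>T. T \<subseteq> (\<Union>i\<in>I. D i) \<Longrightarrow>
      G r par w \<pi> p T x = (\<Sum>i\<in>I. G r par w \<pi> p (T \<inter> D i) x)"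
    and S: "\<And>i. i \<in> I \<Longrightarrow> largest_optimal r par w \<pi> p (D i) x (S i)"
  shows "largest_optimal r par w \<pi> p (\<Union>i\<in>I. D i) x (\<Union>i\<in>I. S i)"
proof -
  let ?G = "\<lambda>T. G r par w \<pi> p T x"
  have S_sub: "S i \<subseteq> D i"
    and S_max: "\<And>T. T \<subseteq> D i \<Longrightarrow> ?G T \<le> ?G (S i)"
    and S_largest: "\<And>T. optimal r par w \<pi> p (D i) x T \<Longrightarrow> T \<subseteq> S i" if "i \<in> I" for i
    using S[OF that] unfolding largest_optimal_def optimal_def by auto
  have "(\<Union>j\<in>I. S j) \<inter> D i = S i" if i: "i \<in> I" for i
  proof -
    have "S j \<inter> D i = {}" if "j \<in> I" "j \<noteq> i" for j
      using S_sub[OF that(1)] disjoint_family_onD[OF disj that(1) i] that(2) by blast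
    then show ?thesis using S_sub[OF i] i by blast
  qed
  then have union_value: "?G (\<Union>j\<in>I. S j) = (\<Sum>i\<in>I. ?G (S i))"
    using additive[of "\<Union>j\<in>I. S j"] S_sub by auto
  have bound: "?G T \<le> ?G (\<Union>j\<in>I. S j)" if "T \<subseteq> (\<Union>i\<in>I. D i)" for T
    using additive[OF that] union_value S_max sum_mono[of I "\<lambda>i. ?G (T \<inter> D i)"] by auto
  have optimal: "optimal r par w \<pi> p (\<Union>i\<in>I. D i) x (\<Union>j\<in>I. S j)"
    using S_sub bound unfolding optimal_def by blast
  moreover have "T \<subseteq> (\<Union>j\<in>I. S j)" if T: "optimal r par w \<pi> p (\<Union>i\<in>I. D i) x T" for T
  proof -
    have T_sub: "T \<subseteq> (\<Union>i\<in>I. D i)" and "?G (\<Union>j\<in>I. S j) \<le> ?G T"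
      using T optimal unfolding optimal_def by auto
    then have parts: "(\<Sum>i\<in>I. ?G (T \<inter> D i)) = (\<Sum>i\<in>I. ?G (S i))"
      using bound additive union_value by (metis order_antisym)
    have part_sub: "T \<inter> D i \<subseteq> S i" if i: "i \<in> I" for i
    proof (rule S_largest[OF i])
      have "?G (T \<inter> D i) = ?G (S i)"
        using sum_mono_inv[OF parts _ i fin] S_max by blast
      then show "optimal r par w \<pi> p (D i) x (T \<inter> D i)"
        using S_max[OF i] unfolding optimal_def by simp
    qed
    show ?thesis
    proof
      fix q assume "q \<in> T"
      then obtain i where "i \<in> I" "q \<in> D i" using T_sub by blast
      then show "q \<in> (\<Union>j\<in>I. S j)" using part_sub \<open>q \<in> T\<close> by blast
    qed
  qed
  ultimately show ?thesis unfolding largest_optimal_def by blast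
qed

lemma depth_le: "(par ^^ k) q = r \<Longrightarrow> depth r par q \<le> k"
  unfolding depth_def by (rule Least_le)

lemma funpow_depth: "(par ^^ k) q = r \<Longrightarrow> (par ^^ depth r par q) q = r"
  unfolding depth_def by (rule LeastI)

lemma depth_root [simp]: "depth r par r = 0"
  using depth_le[where k = 0 and q = r] by simp

lemma anc_root [simp]: "anc r par r = {r}"
  unfolding anc_def by simp

lemma self_anc [simp]: "q \<in> anc r par q"
  unfolding anc_def by force

text \<open>The parts \<open>V\<^sub>A\<^sub>i\<close> of the sub-tree at \<open>a\<close>: the paper's \<open>V\<^sub>A\<^sub>0 = {r\<^sub>A}\<close> is indexed by
  \<open>a\<close> itself and \<open>V\<^sub>A\<^sub>i\<close> by the child \<open>c\<^sub>i\<close>.\<close>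
definition branch :: "'v set \<Rightarrow> 'v \<Rightarrow> ('v \<Rightarrow> 'v) \<Rightarrow> 'v \<Rightarrow> 'v \<Rightarrow> 'v set" where
  "branch V r par a i = (if i = a then {a} else desc V r par i)"

context
  fixes V :: "'v set" and r :: 'v and par :: "'v \<Rightarrow> 'v"
  assumes tree: "rooted_tree V r par"
begin

lemma finite_tree: "finite V"
  using tree unfolding rooted_tree_def by blast

lemma root_in_tree: "r \<in> V"
  using tree unfolding rooted_tree_def by blast

lemma parent_in_tree: "q \<in> V \<Longrightarrow> q \<noteq> r \<Longrightarrow> par q \<in> V"
  using tree unfolding rooted_tree_def by blast

lemma funpow_depth_eq_root: "q \<in> V \<Longrightarrow> (par ^^ depth r par q) q = r"
  using tree unfolding rooted_tree_def by (metis funpow_depth)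

lemma depth_parent:
  assumes "q \<in> V" "q \<noteq> r"
  shows "depth r par q = Suc (depth r par (par q))"
proof -
  obtain n where n: "depth r par q = Suc n"
    using funpow_depth_eq_root[OF assms(1)] assms(2) by (cases "depth r par q") auto
  then have n_steps: "(par ^^ n) (par q) = r"
    using funpow_depth_eq_root[OF assms(1)] by (simp add: funpow_Suc_right del: funpow.simps)
  then have "depth r par (par q) \<le> n" by (rule depth_le)
  moreover have "(par ^^ Suc (depth r par (par q))) q = r"
    using funpow_depth[OF n_steps] by (simp add: funpow_Suc_right del: funpow.simps)
  then have "depth r par q \<le> Suc (depth r par (par q))" by (rule depth_le)
  ultimately show ?thesis using n by linarith
qed

lemma anc_parent:
  assumes "q \<in> V" "q \<noteq> r"
  shows "anc r par q = insert q (anc r par (par q))"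
proof -
  have image: "anc r par v = (\<lambda>k. (par ^^ k) v) ` {..depth r par v}" for v
    unfolding anc_def by auto
  show ?thesis
    unfolding image depth_parent[OF assms] atMost_Suc_eq_insert_0 image_insert image_image
    by (simp add: funpow_Suc_right del: funpow.simps)
qed

lemma tree_induct [consumes 1, case_names root parent]:
  assumes "q \<in> V" and "P r"
    and parent: "\<And>q. q \<in> V \<Longrightarrow> q \<noteq> r \<Longrightarrow> P (par q) \<Longrightarrow> P q"
  shows "P q"
proof -
  have "\<forall>q\<in>V. depth r par q = n \<longrightarrow> P q" for n
  proof (induction n)
    case 0
    then show ?case using funpow_depth_eq_root \<open>P r\<close> by fastforce
  next
    case (Suc n)
    show ?case
    proof (intro ballI impI)
      fix q assume q: "q \<in> V" "depth r par q = Suc n"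
      then have "q \<noteq> r" by auto
      moreover have "par q \<in> V" using parent_in_tree q \<open>q \<noteq> r\<close> by blast
      ultimately show "P q"
        using parent[OF q(1)] Suc.IH q depth_parent by simp
    qed
  qed
  then show ?thesis using \<open>q \<in> V\<close> by blast
qed

lemma anc_subset: "q \<in> V \<Longrightarrow> anc r par q \<subseteq> V"
proof (induction q rule: tree_induct)
  case (parent q)
  then show ?case unfolding anc_parent[OF parent.hyps(1,2)] by blast
qed (simp add: root_in_tree)

lemma anc_trans: "z \<in> V \<Longrightarrow> y \<in> anc r par z \<Longrightarrow> anc r par y \<subseteq> anc r par z"
proof (induction z rule: tree_induct)
  case (parent z)
  have "y = z \<or> y \<in> anc r par (par z)"
    using parent.prems unfolding anc_parent[OF parent.hyps(1,2)] by simp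
  then show ?case
  proof
    assume "y \<in> anc r par (par z)"
    then have "anc r par y \<subseteq> anc r par (par z)" by (rule parent.IH)
    then show ?case unfolding anc_parent[OF parent.hyps(1,2)] by blast
  qed simp
qed simp

lemma anc_chain:
  "q \<in> V \<Longrightarrow> x \<in> anc r par q \<Longrightarrow> y \<in> anc r par q \<Longrightarrow> x \<in> anc r par y \<or> y \<in> anc r par x"
proof (induction q rule: tree_induct)
  case (parent q)
  have "x = q \<or> x \<in> anc r par (par q)" "y = q \<or> y \<in> anc r par (par q)"
    using parent.prems unfolding anc_parent[OF parent.hyps(1,2)] by simp_all
  then show ?case
  proof (elim disjE)
    assume "x \<in> anc r par (par q)" "y \<in> anc r par (par q)"
    then show ?case by (rule parent.IH)
  qed (use parent.prems in simp_all)
qed simp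

lemma anc_depth_less: "y \<in> V \<Longrightarrow> x \<in> anc r par y \<Longrightarrow> x = y \<or> depth r par x < depth r par y"
proof (induction y rule: tree_induct)
  case (parent y)
  have "x = y \<or> x \<in> anc r par (par y)"
    using parent.prems unfolding anc_parent[OF parent.hyps(1,2)] by simp
  then show ?case
  proof
    assume "x \<in> anc r par (par y)"
    then have "x = par y \<or> depth r par x < depth r par (par y)" by (rule parent.IH)
    then show ?case using depth_parent[OF parent.hyps(1,2)] by auto
  qed simp
qed simp

lemma children_depth:
  assumes "c \<in> children V r par a"
  shows "depth r par c = Suc (depth r par a)"
  using assms depth_parent unfolding children_def by auto

lemma anc_child:
  assumes "c \<in> children V r par a"
  shows "anc r par c = insert c (anc r par a)"
  using assms anc_parent unfolding children_def by auto

lemma notin_children: "a \<notin> children V r par a"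
  using children_depth by fastforce

lemma notin_desc_child:
  assumes "a \<in> V" "c \<in> children V r par a"
  shows "a \<notin> desc V r par c"
proof
  assume "a \<in> desc V r par c"
  then have "c = a \<or> depth r par c < depth r par a"
    using anc_depth_less[OF assms(1)] unfolding desc_def by blast
  then show False using children_depth[OF assms(2)] by auto
qed

lemma disjoint_family_desc_children: "disjoint_family_on (desc V r par) (children V r par a)"
  unfolding disjoint_family_on_def
proof (intro ballI impI, rule ccontr)
  fix c c' assume c: "c \<in> children V r par a" and c': "c' \<in> children V r par a" and "c \<noteq> c'"
    and "desc V r par c \<inter> desc V r par c' \<noteq> {}"
  then obtain q where q: "q \<in> V" "c \<in> anc r par q" "c' \<in> anc r par q"
    unfolding desc_def by blast
  have "c \<in> V" "c' \<in> V" using c c' unfolding children_def by auto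
  then have "c = c' \<or> depth r par c < depth r par c' \<or> depth r par c' < depth r par c"
    using anc_chain[OF q] anc_depth_less by blast
  then show False using \<open>c \<noteq> c'\<close> children_depth[OF c] children_depth[OF c'] by simp
qed

lemma ex_child_on_path:
  assumes "v \<in> desc V r par a" "v \<noteq> a"
  shows "\<exists>c\<in>children V r par a. v \<in> desc V r par c"
proof -
  have "v \<in> V \<Longrightarrow> a \<in> anc r par v \<Longrightarrow> v \<noteq> a \<Longrightarrow> \<exists>c\<in>children V r par a. c \<in> anc r par v"
  proof (induction v rule: tree_induct)
    case (parent v)
    then have "a \<in> anc r par (par v)"
      using parent.prems unfolding anc_parent[OF parent.hyps(1,2)] by simp
    show ?case
    proof (cases "par v = a")
      case True
      then show ?thesis using parent.hyps self_anc[of v r par] unfolding children_def by blast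
    next
      case False
      then obtain c where "c \<in> children V r par a" "c \<in> anc r par (par v)"
        using parent.IH \<open>a \<in> anc r par (par v)\<close> by blast
      then show ?thesis unfolding anc_parent[OF parent.hyps(1,2)] by blast
    qed
  qed simp
  then show ?thesis using assms unfolding desc_def by blast
qed

lemma desc_eq_insert_UN_children:
  assumes "a \<in> V"
  shows "desc V r par a = insert a (\<Union>c\<in>children V r par a. desc V r par c)"
proof (intro equalityI subsetI)
  fix v assume v: "v \<in> desc V r par a"
  show "v \<in> insert a (\<Union>c\<in>children V r par a. desc V r par c)"
  proof (cases "v = a")
    case False
    then obtain c where "c \<in> children V r par a" "v \<in> desc V r par c"
      using ex_child_on_path v by blast
    then show ?thesis by blast
  qed simp
next
  fix v assume "v \<in> insert a (\<Union>c\<in>children V r par a. desc V r par c)"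
  then consider "v = a" | c where "c \<in> children V r par a" "v \<in> desc V r par c" by blast
  then show "v \<in> desc V r par a"
  proof cases
    case 1
    then show ?thesis using assms unfolding desc_def by simp
  next
    case (2 c)
    then have "v \<in> V" "c \<in> anc r par v" unfolding desc_def by auto
    moreover have "a \<in> anc r par c" using anc_child[OF 2(1)] by simp
    ultimately show ?thesis using anc_trans unfolding desc_def by blast
  qed
qed

lemma off_path_in_desc_child:
  assumes "v \<in> V" "v \<notin> anc r par a" "c \<in> children V r par a"
    and "desc V r par c \<inter> desc V r par v \<noteq> {}"
  shows "v \<in> desc V r par c"
proof -
  obtain q where q: "q \<in> V" "c \<in> anc r par q" "v \<in> anc r par q"
    using assms(4) unfolding desc_def by blast
  have "c \<in> V" using assms(3) unfolding children_def by blast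
  have "c \<in> anc r par v \<or> v = c"
    using anc_chain[OF q] anc_child[OF assms(3)] assms(2) by blast
  then show ?thesis
    using assms(1) \<open>c \<in> V\<close> self_anc[of c r par] unfolding desc_def by blast
qed

lemma branch_child: "c \<in> children V r par a \<Longrightarrow> branch V r par a c = desc V r par c"
  using notin_children unfolding branch_def by auto

lemma desc_eq_UN_branch:
  assumes "a \<in> V"
  shows "desc V r par a = (\<Union>i\<in>insert a (children V r par a). branch V r par a i)"
  using desc_eq_insert_UN_children[OF assms] by (simp add: branch_child branch_def[of _ _ _ a a])

lemma disjoint_family_branch:
  assumes "a \<in> V"
  shows "disjoint_family_on (branch V r par a) (insert a (children V r par a))"
proof -
  have "disjoint_family_on (branch V r par a) (children V r par a)"
    using disjoint_family_desc_children unfolding disjoint_family_on_def by (simp add: branch_child)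
  moreover have "branch V r par a a \<inter> (\<Union>c\<in>children V r par a. branch V r par a c) = {}"
    using notin_desc_child[OF assms] by (auto simp: branch_child branch_def[of _ _ _ a a])
  ultimately show ?thesis
    using disjoint_family_on_insert[OF notin_children] by blast
qed

lemma branch_meets_desc_unique:
  assumes a: "a \<in> V" and v: "v \<in> V" "v \<notin> anc r par a"
    and i: "i \<in> insert a (children V r par a)" "branch V r par a i \<inter> desc V r par v \<noteq> {}"
    and j: "j \<in> insert a (children V r par a)" "branch V r par a j \<inter> desc V r par v \<noteq> {}"
  shows "i = j"
proof -
  have "a \<notin> desc V r par v" using v(2) unfolding desc_def by blast
  then have "k \<in> children V r par a \<and> v \<in> desc V r par k"
    if "k \<in> insert a (children V r par a)" "branch V r par a k \<inter> desc V r par v \<noteq> {}" for k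
    using that off_path_in_desc_child[OF v] notin_children unfolding branch_def
    by (auto split: if_splits)
  then have "i \<in> children V r par a" "j \<in> children V r par a"
    and "v \<in> desc V r par i \<inter> desc V r par j"
    using i j by blast+
  then show ?thesis
    using disjoint_family_desc_children unfolding disjoint_family_on_def by blast
qed

lemma Wt_eq_sum_hit:
  assumes "U \<subseteq> V"
  shows "Wt r par w U = (\<Sum>v\<in>V - {r}. if U \<inter> desc V r par v = {} then 0 else w v)"
proof -
  have "(\<Union>q\<in>U. anc r par q) - {r} = {v \<in> V - {r}. U \<inter> desc V r par v \<noteq> {}}"
    using assms anc_subset unfolding desc_def by blast
  then have "Wt r par w U = sum w {v \<in> V - {r}. U \<inter> desc V r par v \<noteq> {}}"
    unfolding Wt_def by simp
  also have "\<dots> = (\<Sum>v\<in>V - {r}. if U \<inter> desc V r par v \<noteq> {} then w v else 0)"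
    using finite_tree by (intro sum.inter_filter) simp
  also have "\<dots> = (\<Sum>v\<in>V - {r}. if U \<inter> desc V r par v = {} then 0 else w v)"
    by (rule sum.cong) auto
  finally show ?thesis .
qed

lemma expW_eq_sum_Pr:
  assumes "S \<subseteq> V"
  shows "expW r par w \<pi> S = (\<Sum>v\<in>V - {r}. w v * Pr \<pi> (S \<inter> desc V r par v))"
proof -
  have "finite S" using assms finite_tree finite_subset by blast
  have "expW r par w \<pi> S
      = (\<Sum>U\<in>Pow S. \<Sum>v\<in>V - {r}. subset_weight \<pi> S U * (if U \<inter> desc V r par v = {} then 0 else w v))"
    unfolding expW_def subset_weight_def
    by (intro sum.cong) (use assms Wt_eq_sum_hit in \<open>auto simp: sum_distrib_left\<close>)
  also have "\<dots> = (\<Sum>v\<in>V - {r}. w v *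
      (\<Sum>U\<in>Pow S. subset_weight \<pi> S U * (if U \<inter> desc V r par v = {} then 0 else 1)))"
    by (subst sum.swap) (auto simp: sum_distrib_left intro!: sum.cong)
  finally show ?thesis
    unfolding sum_subset_weight_hitting[OF \<open>finite S\<close>] .
qed

lemma desc_subset_desc_anc:
  assumes "v \<in> anc r par a"
  shows "desc V r par a \<subseteq> desc V r par v"
proof
  fix q assume "q \<in> desc V r par a"
  then have "q \<in> V" "anc r par a \<subseteq> anc r par q"
    using anc_trans unfolding desc_def by auto
  then show "q \<in> desc V r par v" using assms unfolding desc_def by blast
qed

lemma G_eq_off_path:
  assumes "a \<in> V" "S \<subseteq> desc V r par a"
  shows "G r par w \<pi> p S (dpath r par w a)
    = (\<Sum>s\<in>S. p s * \<pi> s) - (\<Sum>v\<in>V - {r} - anc r par a. w v * Pr \<pi> (S \<inter> desc V r par v))"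
proof -
  let ?cost = "\<lambda>v. w v * Pr \<pi> (S \<inter> desc V r par v)"
  have path: "anc r par a - {r} \<subseteq> V - {r}" using anc_subset[OF assms(1)] by blast
  have "(\<Sum>v\<in>anc r par a - {r}. ?cost v) = (\<Sum>v\<in>anc r par a - {r}. w v * Pr \<pi> S)"
  proof (rule sum.cong)
    fix v assume "v \<in> anc r par a - {r}"
    then have "S \<inter> desc V r par v = S" using assms(2) desc_subset_desc_anc by blast
    then show "?cost v = w v * Pr \<pi> S" by simp
  qed simp
  then have "(\<Sum>v\<in>anc r par a - {r}. ?cost v) = dpath r par w a * Pr \<pi> S"
    unfolding dpath_def by (simp add: sum_distrib_right)
  moreover have "(\<Sum>v\<in>V - {r}. ?cost v)
      = (\<Sum>v\<in>anc r par a - {r}. ?cost v) + (\<Sum>v\<in>V - {r} - anc r par a. ?cost v)"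
  proof -
    have "V - {r} - (anc r par a - {r}) = V - {r} - anc r par a" by blast
    moreover have "(\<Sum>v\<in>V - {r}. ?cost v)
        = (\<Sum>v\<in>V - {r} - (anc r par a - {r}). ?cost v) + (\<Sum>v\<in>anc r par a - {r}. ?cost v)"
      using finite_tree by (intro sum.subset_diff[OF path]) simp
    ultimately show ?thesis by simp
  qed
  moreover have "S \<subseteq> V" using assms(2) unfolding desc_def by blast
  ultimately show ?thesis
    unfolding G_def expW_eq_sum_Pr[OF \<open>S \<subseteq> V\<close>] by simp
qed

lemma finite_children: "finite (children V r par a)"
  using finite_tree by (simp add: children_def)

lemma G_eq_sum_branch:
  assumes a: "a \<in> V" and T: "T \<subseteq> desc V r par a"
  shows "G r par w \<pi> p T (dpath r par w a)
    = (\<Sum>i\<in>insert a (children V r par a). G r par w \<pi> p (T \<inter> branch V r par a i) (dpath r par w a))"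
proof -
  let ?I = "insert a (children V r par a)"
  let ?B = "branch V r par a"
  let ?off = "V - {r} - anc r par a"
  have fin: "finite ?I"
    using finite_children by simp
  have T_eq: "T = (\<Union>i\<in>?I. T \<inter> ?B i)"
    using T desc_eq_UN_branch[OF a] by blast
  have disj: "disjoint_family_on (\<lambda>i. T \<inter> ?B i) ?I"
    using disjoint_family_branch[OF a] unfolding disjoint_family_on_def by blast
  have B_sub: "T \<inter> ?B i \<subseteq> desc V r par a" if "i \<in> ?I" for i
    using T by blast
  have prizes: "(\<Sum>s\<in>T. p s * \<pi> s) = (\<Sum>i\<in>?I. \<Sum>s\<in>T \<inter> ?B i. p s * \<pi> s)"
    using fin disj finite_subset[OF T] finite_tree unfolding desc_def
    by (subst T_eq, subst sum.UNION_disjoint_family) auto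
  have "Pr \<pi> (T \<inter> desc V r par v) = (\<Sum>i\<in>?I. Pr \<pi> (T \<inter> ?B i \<inter> desc V r par v))"
    if v: "v \<in> ?off" for v
  proof -
    have "T \<inter> desc V r par v = (\<Union>i\<in>?I. T \<inter> ?B i \<inter> desc V r par v)"
      using T_eq by blast
    also have "Pr \<pi> \<dots> = (\<Sum>i\<in>?I. Pr \<pi> (T \<inter> ?B i \<inter> desc V r par v))"
      using v branch_meets_desc_unique[OF a] by (intro sum_at_most_one_nonempty fin) auto
    finally show ?thesis .
  qed
  then have costs: "(\<Sum>v\<in>?off. w v * Pr \<pi> (T \<inter> desc V r par v))
      = (\<Sum>i\<in>?I. \<Sum>v\<in>?off. w v * Pr \<pi> (T \<inter> ?B i \<inter> desc V r par v))"
    by (simp add: sum_distrib_left sum.swap[of _ ?I])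
  show ?thesis
    unfolding G_eq_off_path[OF a T] prizes costs sum_subtractf[symmetric]
    by (rule sum.cong) (simp_all add: G_eq_off_path[OF a B_sub])
qed

end

theorem proposition8:
  fixes V :: "'v set" and r :: 'v and par :: "'v \<Rightarrow> 'v"
    and w \<pi> p :: "'v \<Rightarrow> real" and a :: 'v
    and S0 :: "'v set" and S :: "'v \<Rightarrow> 'v set"
  assumes tree: "rooted_tree V r par"
    and w_nonneg: "\<forall>v\<in>V - {r}. 0 \<le> w v"
    and \<pi>_range: "\<forall>v\<in>V. 0 < \<pi> v \<and> \<pi> v \<le> 1"
    and a_in: "a \<in> V"
    and S0: "largest_optimal r par w \<pi> p {a} (dpath r par w a) S0"
    and Si: "\<forall>c\<in>children V r par a.
               largest_optimal r par w \<pi> p (desc V r par c) (dpath r par w a) (S c)"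
  shows "largest_optimal r par w \<pi> p (desc V r par a) (dpath r par w a)
           (S0 \<union> (\<Union>c\<in>children V r par a. S c))"
proof -
  let ?I = "insert a (children V r par a)"
  define S' where "S' i = (if i = a then S0 else S i)" for i
  have "largest_optimal r par w \<pi> p (branch V r par a i) (dpath r par w a) (S' i)" if "i \<in> ?I" for i
    using that S0 Si notin_children[OF tree] unfolding S'_def branch_def by auto
  then have "largest_optimal r par w \<pi> p (\<Union>i\<in>?I. branch V r par a i) (dpath r par w a) (\<Union>i\<in>?I. S' i)"
    using finite_children[OF tree] disjoint_family_branch[OF tree a_in]
      G_eq_sum_branch[OF tree a_in] desc_eq_UN_branch[OF tree a_in]
    by (intro largest_optimal_UN) auto
  moreover have "(\<Union>i\<in>?I. S' i) = S0 \<union> (\<Union>c\<in>children V r par a. S c)"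
    using notin_children[OF tree] unfolding S'_def by auto
  ultimately show ?thesis
    using desc_eq_UN_branch[OF tree a_in] by simp
qed

end
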